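(* For all positive rationals $p<q<1$, $p\text{-}\mathsf{WWKL}\nleq_{\mathrm{W}} q\text{-}\mathsf{WWKL}$.
   Context: For a positive rational $q<1$, $q\text{-}\mathsf{WWKL}$ is the problem whose instances are subtrees $T$ of $2^{<\omega}$ with $|\{\sigma\in 2^n:\sigma\in T\}|/2^n\geq q$ for all $n$, and whose solutions are the infinite paths through $T$. $\mathsf{P}\leq_{\mathrm{W}}\mathsf{Q}$ means there are Turing functionals $\Phi,\Psi$ such that for every instance $A$ of $\mathsf{P}$, $\Phi(A)$ is an instance of $\mathsf{Q}$, and for every solution $T$ to $\Phi(A)$, $\Psi(A\oplus T)$ is a solution to $A$. *)

theory Defs
  imports Complex_Main
begin

datatype recf = Zero | Succ | Proj nat | Comp recf "recf list" | Prec recf recf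
  | Mu recf | Orc

inductive eval :: "(nat \<Rightarrow> nat) \<Rightarrow> recf \<Rightarrow> nat list \<Rightarrow> nat \<Rightarrow> bool" for X where
  eval_Zero: "eval X Zero xs 0"
| eval_Succ: "eval X Succ (x # xs) (Suc x)"
| eval_Proj: "i < length xs \<Longrightarrow> eval X (Proj i) xs (xs ! i)"
| eval_Orc: "eval X Orc (x # xs) (X x)"
| eval_Comp: "list_all2 (\<lambda>g y. eval X g xs y) gs ys \<Longrightarrow> eval X f ys z \<Longrightarrow> eval X (Comp f gs) xs z"
| eval_Prec0: "eval X f xs y \<Longrightarrow> eval X (Prec f g) (0 # xs) y"
| eval_PrecS: "eval X (Prec f g) (n # xs) y \<Longrightarrow> eval X g (n # y # xs) z
     \<Longrightarrow> eval X (Prec f g) (Suc n # xs) z"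
| eval_Mu: "eval X f (n # xs) 0 \<Longrightarrow> (\<forall>m<n. \<exists>y. 0 < y \<and> eval X f (m # xs) y)
     \<Longrightarrow> eval X (Mu f) xs n"

definition computes :: "recf \<Rightarrow> (nat \<Rightarrow> nat) \<Rightarrow> (nat \<Rightarrow> nat) \<Rightarrow> bool" where
  "computes e X g \<longleftrightarrow> (\<forall>n. eval X e [n] (g n))"

definition join :: "(nat \<Rightarrow> nat) \<Rightarrow> (nat \<Rightarrow> nat) \<Rightarrow> (nat \<Rightarrow> nat)" where
  "join A B = (\<lambda>n. if even n then A (n div 2) else B (n div 2))"

text \<open>A problem: set of (codes of) instances, and for each instance its set of (codes of) solutions.\<close>
type_synonym problem = "(nat \<Rightarrow> nat) set \<times> ((nat \<Rightarrow> nat) \<Rightarrow> (nat \<Rightarrow> nat) set)"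

definition weihrauch_le :: "problem \<Rightarrow> problem \<Rightarrow> bool" where
  "weihrauch_le P Q \<longleftrightarrow> (\<exists>\<Phi> \<Psi>. \<forall>A \<in> fst P. \<exists>B. computes \<Phi> A B \<and> B \<in> fst Q \<and>
      (\<forall>T \<in> snd Q B. \<exists>C. computes \<Psi> (join A T) C \<and> C \<in> snd P A))"

text \<open>Bijective coding of binary strings by natural numbers (bijective base 2).\<close>
primrec str_code :: "bool list \<Rightarrow> nat" where
  "str_code [] = 0"
| "str_code (b # s) = 2 * str_code s + (if b then 2 else 1)"

definition is_tree :: "bool list set \<Rightarrow> bool" where
  "is_tree T \<longleftrightarrow> (\<forall>s t. s @ t \<in> T \<longrightarrow> s \<in> T)"

definition is_path :: "bool list set \<Rightarrow> (nat \<Rightarrow> bool) \<Rightarrow> bool" where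
  "is_path T f \<longleftrightarrow> (\<forall>n. map f [0..<n] \<in> T)"

definition tree_oracle :: "bool list set \<Rightarrow> nat \<Rightarrow> nat" where
  "tree_oracle T = (\<lambda>n. if \<exists>s\<in>T. n = str_code s then 1 else 0)"

definition path_oracle :: "(nat \<Rightarrow> bool) \<Rightarrow> nat \<Rightarrow> nat" where
  "path_oracle f = (\<lambda>n. if f n then 1 else 0)"

definition wwkl_tree :: "rat \<Rightarrow> bool list set \<Rightarrow> bool" where
  "wwkl_tree q T \<longleftrightarrow> is_tree T \<and>
     (\<forall>n. q \<le> of_nat (card {s \<in> T. length s = n}) / 2 ^ n)"

definition qWWKL :: "rat \<Rightarrow> problem" where
  "qWWKL q = ({tree_oracle T | T. wwkl_tree q T},
     \<lambda>X. {path_oracle f | f T. X = tree_oracle T \<and> wwkl_tree q T \<and> is_path T f})"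

end

theory Submission
  imports Defs
begin

text \<open>
  Suppose Phi, Psi witness a reduction.  Apply Phi to the full binary tree; it returns a tree T0
  of density at least q.  Since Psi is total along every path of T0, a compactness argument
  (Koenig's lemma / the fan theorem) yields a level L all of whose nodes already decide the first
  n output bits of Psi, where 2^n (q - p) > 1.  By averaging we choose a set R of length-n
  strings of density at least p whose preimage Bd (under the forced bits) in level L of T0 has
  measure below q.  The restricted tree S, full up to a large height m and above it confined to
  extensions of R, is an instance of p-WWKL that Phi cannot distinguish from the full tree on the
  finite part of the oracle it uses to compute level L.  So Phi(S) agrees with T0 on level L, and
  being of density at least q it has a path through a level-L node outside Bd.  Psi turns that
  path into a solution of S starting with bits outside R, which is impossible.
\<close>

section \<open>Continuity of oracle computations\<close>

definition agrees_below :: "nat \<Rightarrow> (nat \<Rightarrow> 'a) \<Rightarrow> (nat \<Rightarrow> 'a) \<Rightarrow> bool" where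
  "agrees_below N X Y \<longleftrightarrow> (\<forall>k<N. X k = Y k)"

lemma agrees_below_mono: "agrees_below N X Y \<Longrightarrow> M \<le> N \<Longrightarrow> agrees_below M X Y"
  unfolding agrees_below_def by auto

text \<open>Agreement below N is preserved by joins, since the join queries position j of its
  components only at j div 2.\<close>
lemma agrees_below_join:
  assumes "agrees_below N A' A" and "agrees_below N B' B"
  shows "agrees_below N (join A' B') (join A B)"
  using assms unfolding agrees_below_def join_def
  by (metis div_le_dividend order.strict_trans1)

lemma list_all2_eventually:
  assumes "list_all2 (\<lambda>g y. eventually (\<lambda>N. P N g y) F) gs ys"
  shows "eventually (\<lambda>N. list_all2 (P N) gs ys) F"
  using assms
proof (induction rule: list_all2_induct)
  case Nil then show ?case by simp
next
  case (Cons g y gs ys)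
  then show ?case by (auto elim: eventually_elim2)
qed

text \<open>Use principle: a halting computation reads only finitely much of its oracle, so every
  oracle agreeing with X below some bound N (and hence below all larger bounds) yields the
  same output.\<close>
lemma eval_use:
  "eval X e xs y \<Longrightarrow> \<forall>\<^sub>F N in sequentially. \<forall>X'. agrees_below N X' X \<longrightarrow> eval X' e xs y"
proof (induction rule: eval.induct)
  case (eval_Orc x xs)
  show ?case
  proof (rule eventually_sequentiallyI[of "Suc x"], intro allI impI)
    fix N X' assume "Suc x \<le> N" "agrees_below N X' X"
    then have "X' x = X x" unfolding agrees_below_def by simp
    then show "eval X' Orc (x # xs) (X x)" by (metis eval.eval_Orc)
  qed
next
  case (eval_Comp xs gs ys f z)
  have "list_all2 (\<lambda>g y. \<forall>\<^sub>F N in sequentially. \<forall>X'. agrees_below N X' X \<longrightarrow> eval X' g xs y) gs ys"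
    using eval_Comp.IH(1) by (rule list_all2_mono) simp
  from list_all2_eventually[OF this] eval_Comp.IH(2) show ?case
    by eventually_elim (auto intro: eval.eval_Comp list_all2_mono)
next
  case (eval_PrecS f g n xs y z)
  from eval_PrecS.IH show ?case
    by eventually_elim (auto intro: eval.eval_PrecS)
next
  case (eval_Mu f n xs)
  have "\<forall>m\<in>{..<n}. \<forall>\<^sub>F N in sequentially. \<exists>y>0. \<forall>X'. agrees_below N X' X \<longrightarrow> eval X' f (m # xs) y"
  proof
    fix m assume "m \<in> {..<n}"
    then obtain y where "0 < y" and "\<forall>\<^sub>F N in sequentially. \<forall>X'. agrees_below N X' X \<longrightarrow> eval X' f (m # xs) y"
      using eval_Mu.IH(2) by auto
    then show "\<forall>\<^sub>F N in sequentially. \<exists>y>0. \<forall>X'. agrees_below N X' X \<longrightarrow> eval X' f (m # xs) y"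
      by (auto elim: eventually_mono)
  qed
  from eventually_ball_finite[OF finite_lessThan this] eval_Mu.IH(1) show ?case
    by eventually_elim (blast intro: eval.eval_Mu)
qed (auto intro!: always_eventually eval.intros elim!: eventually_mono)

inductive_cases ZeroE: "eval X Zero xs y"
inductive_cases SuccE: "eval X Succ xs y"
inductive_cases ProjE: "eval X (Proj i) xs y"
inductive_cases OrcE: "eval X Orc xs y"
inductive_cases CompE: "eval X (Comp f gs) xs y"
inductive_cases PrecE: "eval X (Prec f g) xs y"
inductive_cases MuE: "eval X (Mu f) xs y"

lemma eval_det: "eval X e xs y \<Longrightarrow> eval X e xs y' \<Longrightarrow> y' = y"
proof (induction arbitrary: y' rule: eval.induct)
  case (eval_Comp xs gs ys f z)
  from eval_Comp.prems obtain ys' where ys': "list_all2 (\<lambda>g. eval X g xs) gs ys'" "eval X f ys' y'"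
    by (rule CompE)
  have "ys' = ys" using eval_Comp.IH(1) ys'(1)
  proof (induction gs ys arbitrary: ys' rule: list_all2_induct)
    case (Cons g gs y ys)
    then show ?case by (cases ys') auto
  qed simp
  then show ?case using eval_Comp.IH(2) ys'(2) by blast
next
  case (eval_Mu f n xs)
  from eval_Mu.prems have zero: "eval X f (y' # xs) 0" and pos: "\<forall>m<y'. \<exists>y>0. eval X f (m # xs) y"
    by (rule MuE, blast)+
  show ?case
  proof (rule linorder_cases[of y' n])
    assume "y' < n"
    then obtain y where "y > 0" "\<And>z. eval X f (y' # xs) z \<Longrightarrow> z = y"
      using eval_Mu.IH(2) by blast
    then show ?thesis using zero by fastforce
  next
    assume "n < y'"
    then obtain y where "y > 0" "eval X f (n # xs) y" using pos by blast
    then show ?thesis using eval_Mu.IH(1) by fastforce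
  qed
next
  case (eval_PrecS f g n xs y z)
  from eval_PrecS.prems obtain y2 where "eval X (Prec f g) (n # xs) y2" "eval X g (n # y2 # xs) y'"
    by (rule PrecE) simp_all
  then show ?case using eval_PrecS.IH by blast
next
  case (eval_Prec0 f xs y g)
  from eval_Prec0.prems show ?case by (rule PrecE) (use eval_Prec0.IH in simp_all)
qed (auto elim: ZeroE SuccE ProjE OrcE)

lemma computes_use:
  assumes "computes e X g"
  shows "\<exists>N. \<forall>X'. agrees_below N X' X \<longrightarrow> (\<forall>i<n. eval X' e [i] (g i))"
proof -
  have "\<forall>i\<in>{..<n}. \<forall>\<^sub>F N in sequentially. \<forall>X'. agrees_below N X' X \<longrightarrow> eval X' e [i] (g i)"
    using assms eval_use unfolding computes_def by blast
  from eventually_ball_finite[OF finite_lessThan this] show ?thesis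
    unfolding eventually_sequentially by blast
qed

lemma computes_continuous:
  assumes "computes e X g"
  shows "\<exists>N. \<forall>X' g'. agrees_below N X' X \<longrightarrow> computes e X' g' \<longrightarrow> agrees_below n g' g"
proof -
  obtain N where N: "\<And>X'. agrees_below N X' X \<Longrightarrow> \<forall>i<n. eval X' e [i] (g i)"
    using computes_use[OF assms] by blast
  have "agrees_below n g' g" if "agrees_below N X' X" and "computes e X' g'" for X' g'
    unfolding agrees_below_def
    using N[OF that(1)] that(2) eval_det unfolding computes_def by blast
  then show ?thesis by blast
qed

section \<open>Koenig's lemma and the fan theorem\<close>

lemma tree_take: "is_tree U \<Longrightarrow> t \<in> U \<Longrightarrow> take k t \<in> U"
  unfolding is_tree_def by (metis append_take_drop_id)

definition extendible :: "bool list set \<Rightarrow> bool list \<Rightarrow> bool" where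
  "extendible U s \<longleftrightarrow> (\<forall>N\<ge>length s. \<exists>t\<in>U. length t = N \<and> take (length s) t = s)"

primrec greedy_branch :: "bool list set \<Rightarrow> nat \<Rightarrow> bool list" where
  "greedy_branch U 0 = []"
| "greedy_branch U (Suc n) =
     greedy_branch U n @ [extendible U (greedy_branch U n @ [True])]"

lemma extendible_step:
  assumes U: "is_tree U" and s: "extendible U s"
  shows "extendible U (s @ [True]) \<or> extendible U (s @ [False])"
proof (rule ccontr)
  assume "\<not> ?thesis"
  then have "\<forall>b. \<not> extendible U (s @ [b])" by (metis (full_types))
  then have "\<forall>b. \<exists>N\<ge>Suc (length s). \<forall>t\<in>U. length t = N \<longrightarrow> take (Suc (length s)) t \<noteq> s @ [b]"
    unfolding extendible_def by auto
  then obtain N where N: "\<And>b. Suc (length s) \<le> N b"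
    and dead: "\<And>b t. t \<in> U \<Longrightarrow> length t = N b \<Longrightarrow> take (Suc (length s)) t \<noteq> s @ [b]"
    by metis
  define M where "M = max (N True) (N False)"
  have "length s \<le> M" using N[of True] unfolding M_def by simp
  then obtain t where t: "t \<in> U" "length t = M" "take (length s) t = s"
    using s unfolding extendible_def by blast
  define b where "b = t ! length s"
  have "N b \<le> M" unfolding M_def by (cases b) auto
  then have "take (N b) t \<in> U" "length (take (N b) t) = N b"
    using tree_take[OF U t(1)] t(2) by auto
  moreover have "take (Suc (length s)) t = s @ [b]"
    using t N[of b] \<open>N b \<le> M\<close> unfolding b_def by (simp add: take_Suc_conv_app_nth)
  then have "take (Suc (length s)) (take (N b) t) = s @ [b]" using N[of b] by (simp add: min_def)
  ultimately show False using dead by blast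
qed

lemma greedy_branch_extendible:
  assumes U: "is_tree U" and levels: "\<forall>N. \<exists>s\<in>U. length s = N"
  shows "extendible U (greedy_branch U n) \<and> length (greedy_branch U n) = n"
proof (induction n)
  case 0
  then show ?case using levels unfolding extendible_def by auto
next
  case (Suc n)
  then show ?case using extendible_step[OF U] by (cases "extendible U (greedy_branch U n @ [True])") auto
qed

lemma extendible_mem: "extendible U s \<Longrightarrow> s \<in> U"
  unfolding extendible_def by (metis order_refl take_all)

lemma koenig:
  assumes U: "is_tree U" and levels: "\<forall>N. \<exists>s\<in>U. length s = N"
  shows "\<exists>f. is_path U f"
proof -
  define f where "f n = greedy_branch U (Suc n) ! n" for n
  have "map f [0..<n] = greedy_branch U n" for n
  proof (induction n)
    case (Suc n)
    have "length (greedy_branch U n) = n" using greedy_branch_extendible[OF U levels] by blast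
    then show ?case using Suc by (simp add: f_def nth_append)
  qed simp
  then have "is_path U f"
    unfolding is_path_def using greedy_branch_extendible[OF U levels] extendible_mem by metis
  then show ?thesis by blast
qed

lemma uniform_bar:
  assumes T: "is_tree T" and D_ext: "\<And>s t. s \<in> D \<Longrightarrow> s @ t \<in> D"
    and bar: "\<And>f. is_path T f \<Longrightarrow> \<exists>N. map f [0..<N] \<in> D"
  shows "\<exists>L. \<forall>\<sigma>\<in>T. length \<sigma> = L \<longrightarrow> \<sigma> \<in> D"
proof (rule ccontr)
  assume "\<not> ?thesis"
  then have levels: "\<forall>N. \<exists>s\<in>T - D. length s = N" by blast
  have "is_tree (T - D)" using T D_ext unfolding is_tree_def by blast
  then obtain f where f: "is_path (T - D) f" using koenig levels by blast
  then have "is_path T f" unfolding is_path_def by blast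
  then show False using bar f unfolding is_path_def by blast
qed

lemma path_avoiding:
  assumes T: "is_tree T"
    and wide: "\<And>N. L \<le> N \<Longrightarrow> \<exists>s\<in>T. length s = N \<and> take L s \<notin> Bd"
  shows "\<exists>f. is_path T f \<and> map f [0..<L] \<notin> Bd"
proof -
  define U where "U = {s. \<exists>u. L \<le> length (s @ u) \<and> s @ u \<in> T \<and> take L (s @ u) \<notin> Bd}"
  have "is_tree U" unfolding is_tree_def
  proof (intro allI impI)
    fix s t assume "s @ t \<in> U"
    then obtain u where u: "L \<le> length ((s @ t) @ u)" "(s @ t) @ u \<in> T" "take L ((s @ t) @ u) \<notin> Bd"
      unfolding U_def by blast
    show "s \<in> U" unfolding U_def using u[unfolded append_assoc] by blast
  qed
  moreover have "\<forall>N. \<exists>s\<in>U. length s = N"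
  proof
    fix N
    obtain t where t: "t \<in> T" "length t = max N L" "take L t \<notin> Bd" using wide[of "max N L"] by auto
    then have "take N t @ drop N t \<in> T \<and> L \<le> length (take N t @ drop N t)
        \<and> take L (take N t @ drop N t) \<notin> Bd" by simp
    then have "take N t \<in> U" unfolding U_def by blast
    moreover have "length (take N t) = N" using t(2) by simp
    ultimately show "\<exists>s\<in>U. length s = N" by blast
  qed
  ultimately obtain f where f: "is_path U f" using koenig by blast
  have in_T: "s \<in> T" if "s \<in> U" for s
    using that T unfolding U_def is_tree_def by blast
  have "map f [0..<L] \<in> U" using f unfolding is_path_def by blast
  then obtain u where "take L (map f [0..<L] @ u) \<notin> Bd" unfolding U_def by blast
  then have "map f [0..<L] \<notin> Bd" by simp
  moreover have "is_path T f" using f in_T unfolding is_path_def by blast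
  ultimately show ?thesis by blast
qed

section \<open>Finite prefixes that decide the output of a functional\<close>

definition forces :: "recf \<Rightarrow> (nat \<Rightarrow> nat) \<Rightarrow> bool list \<Rightarrow> nat \<Rightarrow> nat \<Rightarrow> bool" where
  "forces \<Psi> A \<sigma> i y \<longleftrightarrow> (\<forall>A' f. agrees_below (length \<sigma>) A' A \<longrightarrow> map f [0..<length \<sigma>] = \<sigma> \<longrightarrow>
     eval (join A' (path_oracle f)) \<Psi> [i] y)"

definition decides :: "recf \<Rightarrow> (nat \<Rightarrow> nat) \<Rightarrow> nat \<Rightarrow> bool list \<Rightarrow> bool" where
  "decides \<Psi> A n \<sigma> \<longleftrightarrow> (\<forall>i<n. \<exists>y. forces \<Psi> A \<sigma> i y)"

definition forced_bits :: "recf \<Rightarrow> (nat \<Rightarrow> nat) \<Rightarrow> nat \<Rightarrow> bool list \<Rightarrow> bool list" where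
  "forced_bits \<Psi> A n \<sigma> = map (\<lambda>i. (SOME y. forces \<Psi> A \<sigma> i y) = 1) [0..<n]"

lemma map_upt_prefix:
  assumes "map f [0..<length (\<sigma> @ \<tau>)] = \<sigma> @ \<tau>"
  shows "map f [0..<length \<sigma>] = \<sigma>"
proof -
  have "take (length \<sigma>) (map f [0..<length (\<sigma> @ \<tau>)]) = map f [0..<length \<sigma>]"
    by (simp add: take_map)
  then show ?thesis using assms by simp
qed

lemma forces_append: "forces \<Psi> A \<sigma> i y \<Longrightarrow> forces \<Psi> A (\<sigma> @ \<tau>) i y"
  unfolding forces_def
proof (intro allI impI)
  fix A' f
  assume \<sigma>: "\<forall>A' f. agrees_below (length \<sigma>) A' A \<longrightarrow> map f [0..<length \<sigma>] = \<sigma> \<longrightarrow>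
      eval (join A' (path_oracle f)) \<Psi> [i] y"
    and A': "agrees_below (length (\<sigma> @ \<tau>)) A' A" and f: "map f [0..<length (\<sigma> @ \<tau>)] = \<sigma> @ \<tau>"
  have "agrees_below (length \<sigma>) A' A" using agrees_below_mono[OF A'] by simp
  then show "eval (join A' (path_oracle f)) \<Psi> [i] y" using \<sigma> map_upt_prefix[OF f] by blast
qed

lemma decides_append: "decides \<Psi> A n \<sigma> \<Longrightarrow> decides \<Psi> A n (\<sigma> @ \<tau>)"
  unfolding decides_def using forces_append by blast

lemma decides_along_path:
  assumes "computes \<Psi> (join A (path_oracle f)) C"
  shows "\<exists>N. decides \<Psi> A n (map f [0..<N])"
proof -
  obtain N where N: "\<And>X'. agrees_below N X' (join A (path_oracle f)) \<Longrightarrow> \<forall>i<n. eval X' \<Psi> [i] (C i)"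
    using computes_use[OF assms] by blast
  have "forces \<Psi> A (map f [0..<N]) i (C i)" if "i < n" for i
    unfolding forces_def
  proof (intro allI impI)
    fix A' g
    assume A': "agrees_below (length (map f [0..<N])) A' A"
      and g: "map g [0..<length (map f [0..<N])] = map f [0..<N]"
    have "agrees_below N (path_oracle g) (path_oracle f)"
      using g unfolding agrees_below_def path_oracle_def by (simp add: map_eq_conv)
    moreover have "agrees_below N A' A" using A' by simp
    ultimately show "eval (join A' (path_oracle g)) \<Psi> [i] (C i)"
      using N agrees_below_join that by blast
  qed
  then show ?thesis unfolding decides_def by blast
qed

lemma decision_level:
  assumes "is_tree T" and total: "\<And>f. is_path T f \<Longrightarrow> \<exists>C. computes \<Psi> (join A (path_oracle f)) C"
  shows "\<exists>L. \<forall>\<sigma>\<in>T. length \<sigma> = L \<longrightarrow> decides \<Psi> A n \<sigma>"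
  using uniform_bar[of T "{\<sigma>. decides \<Psi> A n \<sigma>}"] assms decides_append decides_along_path by blast

lemma decided_bits:
  assumes dec: "decides \<Psi> A n \<sigma>" and A': "agrees_below (length \<sigma>) A' A"
    and f: "map f [0..<length \<sigma>] = \<sigma>"
    and comp: "computes \<Psi> (join A' (path_oracle f)) (path_oracle f')"
  shows "map f' [0..<n] = forced_bits \<Psi> A n \<sigma>"
proof -
  have "f' i \<longleftrightarrow> (SOME y. forces \<Psi> A \<sigma> i y) = 1" if "i < n" for i
  proof -
    have "forces \<Psi> A \<sigma> i (SOME y. forces \<Psi> A \<sigma> i y)"
      using dec that unfolding decides_def by (blast intro: someI_ex)
    then have "eval (join A' (path_oracle f)) \<Psi> [i] (SOME y. forces \<Psi> A \<sigma> i y)"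
      using A' f unfolding forces_def by blast
    moreover have "eval (join A' (path_oracle f)) \<Psi> [i] (path_oracle f' i)"
      using comp unfolding computes_def by blast
    ultimately have "path_oracle f' i = (SOME y. forces \<Psi> A \<sigma> i y)" by (rule eval_det)
    then show ?thesis unfolding path_oracle_def by (cases "f' i") auto
  qed
  then show ?thesis unfolding forced_bits_def by simp
qed

section \<open>Coding trees as oracles\<close>

lemma str_code_inj: "inj str_code"
proof (rule injI)
  fix s t :: "bool list"
  show "str_code s = str_code t \<Longrightarrow> s = t"
  proof (induction s arbitrary: t)
    case Nil then show ?case by (cases t) (auto split: if_splits)
  next
    case (Cons a s)
    then obtain b t' where t: "t = b # t'" by (cases t) (auto split: if_splits)
    have eq: "2 * str_code s + (if a then 2 else 1) = 2 * str_code t' + (if b then (2::nat) else 1)"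
      using Cons.prems t by simp
    then have "a = b" by (cases a; cases b) presburger+
    then show ?case using eq Cons.IH t by simp
  qed
qed

lemma str_code_bounds: "2 ^ length s \<le> str_code s + 1 \<and> str_code s + 1 < 2 ^ Suc (length s)"
  by (induction s) auto

lemma tree_oracle_mem: "tree_oracle S (str_code s) = 1 \<longleftrightarrow> s \<in> S"
  unfolding tree_oracle_def by (auto simp: inj_eq[OF str_code_inj])

lemma tree_oracle_inj: "tree_oracle S = tree_oracle S' \<Longrightarrow> S = S'"
  using tree_oracle_mem by (metis subsetI subset_antisym)

lemma tree_oracle_level:
  assumes "agrees_below (2 ^ Suc L) (tree_oracle T) (tree_oracle T')" and "length s = L"
  shows "s \<in> T \<longleftrightarrow> s \<in> T'"
proof -
  have "str_code s < 2 ^ Suc L" using str_code_bounds[of s] assms(2) by simp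
  then have "tree_oracle T (str_code s) = tree_oracle T' (str_code s)"
    using assms(1) unfolding agrees_below_def by blast
  then show ?thesis by (simp flip: tree_oracle_mem)
qed

lemma computes_tree_level_continuous:
  assumes "computes \<Phi> A (tree_oracle T0)"
  shows "\<exists>K. \<forall>A' T. agrees_below K A' A \<longrightarrow> computes \<Phi> A' (tree_oracle T)
    \<longrightarrow> (\<forall>\<sigma>. length \<sigma> = L \<longrightarrow> (\<sigma> \<in> T \<longleftrightarrow> \<sigma> \<in> T0))"
  using computes_continuous[OF assms, of "2 ^ Suc L"] tree_oracle_level by blast

section \<open>Counting strings\<close>

lemma card_level: "card {s :: bool list. length s = n} = 2 ^ n"
  using card_lists_length_eq[of "UNIV :: bool set" n] by simp

lemma finite_level: "finite {s :: bool list. length s = n}"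
  using finite_lists_length_eq[of "UNIV :: bool set" n] by simp

lemma card_cone:
  assumes R: "\<forall>\<sigma>\<in>R. length \<sigma> = L" and "L \<le> N"
  shows "card {s :: bool list. length s = N \<and> take L s \<in> R} = card R * 2 ^ (N - L)"
proof -
  define Ext where "Ext = {b :: bool list. length b = N - L}"
  let ?app = "\<lambda>(a, b). a @ b :: bool list"
  have "bij_betw ?app (R \<times> Ext) {s. length s = N \<and> take L s \<in> R}"
  proof (rule bij_betwI')
    fix x y assume "x \<in> R \<times> Ext" "y \<in> R \<times> Ext"
    then show "(?app x = ?app y) = (x = y)" using R by (cases x; cases y) auto
  next
    fix x assume "x \<in> R \<times> Ext"
    then show "?app x \<in> {s. length s = N \<and> take L s \<in> R}"
      using R \<open>L \<le> N\<close> unfolding Ext_def by auto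
  next
    fix s assume "s \<in> {s :: bool list. length s = N \<and> take L s \<in> R}"
    then have "(take L s, drop L s) \<in> R \<times> Ext" and "s = ?app (take L s, drop L s)"
      unfolding Ext_def by simp_all
    then show "\<exists>x\<in>R \<times> Ext. s = ?app x" by blast
  qed
  then have "card {s. length s = N \<and> take L s \<in> R} = card (R \<times> Ext)"
    by (simp add: bij_betw_same_card)
  also have "\<dots> = card R * 2 ^ (N - L)"
    unfolding Ext_def by (simp add: card_cartesian_product card_level)
  finally show ?thesis .
qed

lemma wwkl_escapes_small_set:
  fixes q :: rat
  assumes T: "wwkl_tree q T" and Bd: "\<forall>\<sigma>\<in>Bd. length \<sigma> = L"
    and small: "of_nat (card Bd) < q * 2 ^ L" and "L \<le> N"
  shows "\<exists>s\<in>T. length s = N \<and> take L s \<notin> Bd"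
proof (rule ccontr)
  assume "\<not> ?thesis"
  then have "{s \<in> T. length s = N} \<subseteq> {s. length s = N \<and> take L s \<in> Bd}" by auto
  then have "card {s \<in> T. length s = N} \<le> card {s. length s = N \<and> take L s \<in> Bd}"
    by (intro card_mono) (auto intro: finite_subset[OF _ finite_level[of N]])
  also have "\<dots> = card Bd * 2 ^ (N - L)" using card_cone[OF Bd \<open>L \<le> N\<close>] .
  finally have "of_nat (card {s \<in> T. length s = N}) \<le> (of_nat (card Bd * 2 ^ (N - L)) :: rat)"
    by (simp only: of_nat_le_iff)
  also have "\<dots> = of_nat (card Bd) * 2 ^ (N - L)" by simp
  also have "\<dots> < q * 2 ^ L * 2 ^ (N - L)" using small by simp
  also have "\<dots> = q * 2 ^ N" using \<open>L \<le> N\<close> by (simp add: mult.assoc flip: power_add)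
  finally have "of_nat (card {s \<in> T. length s = N}) / 2 ^ N < q" by (simp add: divide_less_eq)
  moreover have "q \<le> of_nat (card {s \<in> T. length s = N}) / 2 ^ N"
    using T unfolding wwkl_tree_def by blast
  ultimately show False by linarith
qed

lemma wwkl_path_avoiding:
  fixes q :: rat
  assumes T: "wwkl_tree q T" and Bd: "\<forall>\<sigma>\<in>Bd. length \<sigma> = L"
    and small: "of_nat (card Bd) < q * 2 ^ L"
  shows "\<exists>f. is_path T f \<and> map f [0..<L] \<notin> Bd"
  using path_avoiding wwkl_escapes_small_set[OF assms] T unfolding wwkl_tree_def by blast

text \<open>Averaging: among the c-element subsets of V there is one whose total weight is at most
  the fraction c / |V| of the total weight of V (remove a heaviest element and induct).\<close>
lemma light_subset:
  fixes w :: "'a \<Rightarrow> nat"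
  assumes "finite V" and "c \<le> card V"
  shows "\<exists>R\<subseteq>V. card R = c \<and> card V * sum w R \<le> c * sum w V"
  using assms
proof (induction "card V" arbitrary: V)
  case 0
  then show ?case by auto
next
  case (Suc k)
  show ?case
  proof (cases "c = card V")
    case True
    then show ?thesis by blast
  next
    case False
    have "w ` V \<noteq> {}" using Suc.hyps(2) by auto
    then have "Max (w ` V) \<in> w ` V" using Suc.prems(1) by simp
    then obtain x where x: "x \<in> V" and "w x = Max (w ` V)" by auto
    then have heaviest: "\<And>y. y \<in> V \<Longrightarrow> w y \<le> w x" using Suc.prems(1) by simp
    have card_rest: "card (V - {x}) = k" using Suc.hyps(2) x by simp
    then obtain R where R: "R \<subseteq> V - {x}" "card R = c" and avg: "k * sum w R \<le> c * sum w (V - {x})"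
      using Suc.hyps(1)[of "V - {x}"] Suc.prems False Suc.hyps(2) by auto
    have "sum w R \<le> c * w x"
      using sum_mono[of R w "\<lambda>_. w x"] R heaviest by auto
    moreover have "sum w V = sum w (V - {x}) + w x"
      using Suc.prems(1) x by (simp add: sum.remove)
    ultimately have "card V * sum w R \<le> c * sum w V"
      using avg Suc.hyps(2)[symmetric] by (simp add: algebra_simps)
    then show ?thesis using R by blast
  qed
qed

lemma light_preimage:
  assumes "finite X" and "finite V" and g: "g ` X \<subseteq> V" and "c \<le> card V"
  shows "\<exists>R\<subseteq>V. card R = c \<and> card V * card {x\<in>X. g x \<in> R} \<le> c * card X"
proof -
  define w where "w v = card {x\<in>X. g x = v}" for v
  have fibres: "sum w R = card {x\<in>X. g x \<in> R}" if "R \<subseteq> V" for R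
  proof -
    have "finite R" using that \<open>finite V\<close> finite_subset by blast
    then have "card (\<Union>v\<in>R. {x\<in>X. g x = v}) = sum w R"
      unfolding w_def using \<open>finite X\<close> by (intro card_UN_disjoint) auto
    moreover have "{x\<in>X. g x \<in> R} = (\<Union>v\<in>R. {x\<in>X. g x = v})" by auto
    ultimately show ?thesis by simp
  qed
  obtain R where "R \<subseteq> V" "card R = c" "card V * sum w R \<le> c * sum w V"
    using light_subset[OF assms(2,4)] by blast
  moreover have "{x\<in>X. g x \<in> V} = X" using g by auto
  ultimately show ?thesis using fibres[of R] fibres[of V] by auto
qed

lemma low_density_preimage:
  fixes p q :: rat and Lev :: "bool list set" and g :: "bool list \<Rightarrow> bool list"
  assumes p: "0 < p" "p \<le> 1" and gap: "1 < (q - p) * 2 ^ n"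
    and Lev: "\<forall>\<sigma>\<in>Lev. length \<sigma> = L" and g: "\<forall>\<sigma>\<in>Lev. length (g \<sigma>) = n"
  shows "\<exists>R. R \<subseteq> {\<tau>. length \<tau> = n} \<and> p * 2 ^ n \<le> of_nat (card R)
    \<and> of_nat (card {\<sigma>\<in>Lev. g \<sigma> \<in> R}) < q * 2 ^ L"
proof -
  define c where "c = nat \<lceil>p * 2 ^ n\<rceil>"
  have c_int: "of_nat c = (of_int \<lceil>p * 2 ^ n\<rceil> :: rat)"
    using p unfolding c_def by (simp add: order.strict_implies_order)
  have c_low: "p * 2 ^ n \<le> of_nat c" using c_int by (simp add: le_of_int_ceiling)
  have "(q - p) * 2 ^ n = q * 2 ^ n - p * 2 ^ n" by (simp add: algebra_simps)
  then have c_high: "of_nat c < q * 2 ^ n" using c_int gap ceiling_correct[of "p * 2 ^ n"] by linarith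
  have "\<lceil>p * 2 ^ n\<rceil> \<le> 2 ^ n" using p by (simp add: ceiling_le_iff)
  then have "c \<le> card {\<tau> :: bool list. length \<tau> = n}" unfolding c_def card_level by (simp add: nat_le_iff)
  moreover have Lev_sub: "Lev \<subseteq> {\<sigma>. length \<sigma> = L}" using Lev by auto
  then have "finite Lev" using finite_subset finite_level by blast
  ultimately obtain R where R: "R \<subseteq> {\<tau>. length \<tau> = n}" "card R = c"
    and light: "2 ^ n * card {\<sigma>\<in>Lev. g \<sigma> \<in> R} \<le> c * card Lev"
    using light_preimage[of Lev "{\<tau>. length \<tau> = n}" g c] finite_level g card_level by auto
  have "card Lev \<le> 2 ^ L" using card_mono[OF finite_level Lev_sub] card_level by simp
  then have "2 ^ n * card {\<sigma>\<in>Lev. g \<sigma> \<in> R} \<le> c * 2 ^ L"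
    using light mult_le_mono2[of "card Lev" "2 ^ L" c] by linarith
  then have "of_nat (2 ^ n * card {\<sigma>\<in>Lev. g \<sigma> \<in> R}) \<le> (of_nat (c * 2 ^ L) :: rat)"
    by (simp only: of_nat_le_iff)
  then have "2 ^ n * of_nat (card {\<sigma>\<in>Lev. g \<sigma> \<in> R}) \<le> (of_nat c * 2 ^ L :: rat)"
    by simp
  also have "\<dots> < (q * 2 ^ n) * 2 ^ L" using c_high by simp
  also have "\<dots> = 2 ^ n * (q * 2 ^ L)" by (simp add: algebra_simps)
  finally have "of_nat (card {\<sigma>\<in>Lev. g \<sigma> \<in> R}) < q * 2 ^ L"
    by (rule mult_less_cancel_left_pos[THEN iffD1, rotated]) simp
  then show ?thesis using R c_low by auto
qed

section \<open>The restricted instance\<close>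

definition restricted_tree :: "nat \<Rightarrow> nat \<Rightarrow> bool list set \<Rightarrow> bool list set" where
  "restricted_tree m n R = {s. length s \<le> m \<or> take n s \<in> R}"

lemma restricted_tree_is_tree:
  assumes "n \<le> m"
  shows "is_tree (restricted_tree m n R)"
  unfolding is_tree_def restricted_tree_def
proof (intro allI impI)
  fix s t :: "bool list"
  assume st: "s @ t \<in> {s. length s \<le> m \<or> take n s \<in> R}"
  show "s \<in> {s. length s \<le> m \<or> take n s \<in> R}"
  proof (cases "length s \<le> m")
    case False
    then have "take n (s @ t) = take n s" using assms by simp
    then show ?thesis using st False by auto
  qed simp
qed

lemma restricted_tree_wwkl:
  fixes p :: rat
  assumes "p \<le> 1" and "n \<le> m" and R: "\<forall>\<tau>\<in>R. length \<tau> = n" and dense: "p * 2 ^ n \<le> of_nat (card R)"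
  shows "wwkl_tree p (restricted_tree m n R)"
  unfolding wwkl_tree_def
proof (intro conjI allI)
  show "is_tree (restricted_tree m n R)" using restricted_tree_is_tree[OF \<open>n \<le> m\<close>] .
next
  fix l
  let ?level = "{s \<in> restricted_tree m n R. length s = l}"
  have "p * 2 ^ l \<le> of_nat (card ?level)"
  proof (cases "l \<le> m")
    case True
    then have "?level = {s. length s = l}" unfolding restricted_tree_def by auto
    then show ?thesis using card_level[of l] \<open>p \<le> 1\<close> by simp
  next
    case False
    then have "?level = {s. length s = l \<and> take n s \<in> R}" unfolding restricted_tree_def by auto
    then have "card ?level = card R * 2 ^ (l - n)" using card_cone[OF R] False \<open>n \<le> m\<close> by simp
    moreover have "(2::rat) ^ l = 2 ^ n * 2 ^ (l - n)" using False \<open>n \<le> m\<close> by (simp flip: power_add)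
    ultimately show ?thesis using dense by (simp add: mult_right_mono)
  qed
  then show "p \<le> of_nat (card ?level) / 2 ^ l" by (simp add: pos_le_divide_eq)
qed

lemma restricted_tree_path:
  assumes "n \<le> m" and "is_path (restricted_tree m n R) f"
  shows "map f [0..<n] \<in> R"
proof -
  have "map f [0..<Suc m] \<in> restricted_tree m n R" using assms(2) unfolding is_path_def by blast
  moreover have "take n (map f [0..<Suc m]) = map f [0..<n]" using assms(1) by (simp add: take_map)
  ultimately show ?thesis unfolding restricted_tree_def by simp
qed

text \<open>Queries below m cannot tell the restricted tree apart from the full tree, because
  a string with code below m is no longer than m.\<close>
lemma restricted_tree_oracle:
  "agrees_below m (tree_oracle (restricted_tree m n R)) (tree_oracle UNIV)"
  unfolding agrees_below_def
proof (intro allI impI)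
  fix k :: nat assume "k < m"
  then have k: "k < 2 ^ m" using less_exp[of m] by linarith
  have "s \<in> restricted_tree m n R" if "k = str_code s" for s
  proof -
    have "(2::nat) ^ length s \<le> 2 ^ m" using str_code_bounds[of s] that k by linarith
    then have "length s \<le> m" by simp
    then show ?thesis unfolding restricted_tree_def by simp
  qed
  then show "tree_oracle (restricted_tree m n R) k = tree_oracle UNIV k"
    unfolding tree_oracle_def by auto
qed

lemma restricted_solution_bits:
  assumes "decides \<Psi> A n \<sigma>" and "agrees_below (length \<sigma>) (tree_oracle (restricted_tree m n R)) A"
    and "map f [0..<length \<sigma>] = \<sigma>" and "n \<le> m" and "is_path (restricted_tree m n R) f'"
    and "computes \<Psi> (join (tree_oracle (restricted_tree m n R)) (path_oracle f)) (path_oracle f')"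
  shows "forced_bits \<Psi> A n \<sigma> \<in> R"
  using decided_bits[OF assms(1,2,3,6)] restricted_tree_path[OF assms(4,5)] by simp

definition tree_reduction :: "rat \<Rightarrow> rat \<Rightarrow> recf \<Rightarrow> recf \<Rightarrow> bool" where
  "tree_reduction p q \<Phi> \<Psi> \<longleftrightarrow> (\<forall>S. wwkl_tree p S \<longrightarrow> (\<exists>T. computes \<Phi> (tree_oracle S) (tree_oracle T)
     \<and> wwkl_tree q T \<and> (\<forall>f. is_path T f \<longrightarrow> (\<exists>f'. is_path S f'
       \<and> computes \<Psi> (join (tree_oracle S) (path_oracle f)) (path_oracle f')))))"

lemma tree_reduction_of_weihrauch_le:
  assumes "weihrauch_le (qWWKL p) (qWWKL q)"
  shows "\<exists>\<Phi> \<Psi>. tree_reduction p q \<Phi> \<Psi>"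
proof -
  obtain \<Phi> \<Psi> where red: "\<forall>A \<in> fst (qWWKL p). \<exists>B. computes \<Phi> A B \<and> B \<in> fst (qWWKL q) \<and>
      (\<forall>T \<in> snd (qWWKL q) B. \<exists>C. computes \<Psi> (join A T) C \<and> C \<in> snd (qWWKL p) A)"
    using assms unfolding weihrauch_le_def by blast
  have "\<exists>T. computes \<Phi> (tree_oracle S) (tree_oracle T) \<and> wwkl_tree q T \<and> (\<forall>f. is_path T f \<longrightarrow>
      (\<exists>f'. is_path S f' \<and> computes \<Psi> (join (tree_oracle S) (path_oracle f)) (path_oracle f')))"
    if S: "wwkl_tree p S" for S
  proof -
    obtain T where forward: "computes \<Phi> (tree_oracle S) (tree_oracle T)" and T: "wwkl_tree q T"
      and pull_back: "\<forall>P \<in> snd (qWWKL q) (tree_oracle T). \<exists>C. computes \<Psi> (join (tree_oracle S) P) C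
        \<and> C \<in> snd (qWWKL p) (tree_oracle S)"
      using red S unfolding qWWKL_def by auto
    have "\<exists>f'. is_path S f' \<and> computes \<Psi> (join (tree_oracle S) (path_oracle f)) (path_oracle f')"
      if "is_path T f" for f
    proof -
      have "path_oracle f \<in> snd (qWWKL q) (tree_oracle T)" unfolding qWWKL_def using T that by auto
      then obtain C where C: "computes \<Psi> (join (tree_oracle S) (path_oracle f)) C"
        and "C \<in> snd (qWWKL p) (tree_oracle S)"
        using pull_back by blast
      then obtain f' S' where "C = path_oracle f'" "tree_oracle S = tree_oracle S'" "is_path S' f'"
        unfolding qWWKL_def by auto
      then show ?thesis using C tree_oracle_inj by metis
    qed
    then show ?thesis using forward T by blast
  qed
  then show ?thesis unfolding tree_reduction_def by blast
qed

lemma full_tree_wwkl: "p \<le> 1 \<Longrightarrow> wwkl_tree p UNIV"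
  unfolding wwkl_tree_def is_tree_def using card_level by simp

lemma exists_gap_exponent:
  fixes p q :: rat assumes "p < q" shows "\<exists>n::nat. 1 < (q - p) * 2 ^ n"
proof -
  obtain n :: nat where n: "1 / (q - p) < of_nat n" using reals_Archimedean2 by blast
  have "(of_nat n :: rat) < 2 ^ n" using of_nat_less_two_power .
  then have "1 / (q - p) < 2 ^ n" using n by linarith
  then show ?thesis using assms by (auto simp: field_simps)
qed

text \<open>Applied to the full tree, Phi returns a q-tree T0.  Psi is total along its paths, so by
  the fan theorem all nodes of T0 of some length L decide the first n output bits of Psi.\<close>
lemma deciding_level_of_full_image:
  assumes red: "tree_reduction p q \<Phi> \<Psi>" and "0 < p" and "p \<le> 1"
  shows "\<exists>T0 L. computes \<Phi> (tree_oracle UNIV) (tree_oracle T0)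
    \<and> (\<forall>\<sigma>\<in>T0. length \<sigma> = L \<longrightarrow> decides \<Psi> (tree_oracle UNIV) n \<sigma>)"
proof -
  obtain T0 where "computes \<Phi> (tree_oracle UNIV) (tree_oracle T0)" and T0: "wwkl_tree q T0"
    and "\<And>f. is_path T0 f \<Longrightarrow> \<exists>f'. computes \<Psi> (join (tree_oracle UNIV) (path_oracle f)) (path_oracle f')"
    using red full_tree_wwkl[OF \<open>p \<le> 1\<close>] unfolding tree_reduction_def by fastforce
  moreover have "is_tree T0" using T0 unfolding wwkl_tree_def by simp
  ultimately show ?thesis using decision_level[of T0 \<Psi> "tree_oracle UNIV" n] by blast
qed

text \<open>Phi cannot distinguish a restricted instance of large height from the full tree on the
  finite part of the oracle it reads to compute level L of its output.\<close>
lemma restricted_image_level: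
  fixes p q :: rat
  assumes red: "tree_reduction p q \<Phi> \<Psi>" and \<Phi>_full: "computes \<Phi> (tree_oracle UNIV) (tree_oracle T0)"
    and "p \<le> 1" and "\<forall>\<tau>\<in>R. length \<tau> = n" and "p * 2 ^ n \<le> of_nat (card R)"
  shows "\<exists>m T. L \<le> m \<and> n \<le> m \<and> wwkl_tree q T \<and> (\<forall>\<sigma>. length \<sigma> = L \<longrightarrow> (\<sigma> \<in> T \<longleftrightarrow> \<sigma> \<in> T0))
    \<and> (\<forall>f. is_path T f \<longrightarrow> (\<exists>f'. is_path (restricted_tree m n R) f'
      \<and> computes \<Psi> (join (tree_oracle (restricted_tree m n R)) (path_oracle f)) (path_oracle f')))"
proof -
  obtain K where K: "\<And>A T \<sigma>. agrees_below K A (tree_oracle UNIV) \<Longrightarrow> computes \<Phi> A (tree_oracle T)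
      \<Longrightarrow> length \<sigma> = L \<Longrightarrow> \<sigma> \<in> T \<longleftrightarrow> \<sigma> \<in> T0"
    using computes_tree_level_continuous[OF \<Phi>_full] by blast
  define m where "m = K + L + n"
  have "wwkl_tree p (restricted_tree m n R)"
    unfolding m_def using assms by (intro restricted_tree_wwkl) auto
  then obtain T where \<Phi>_S: "computes \<Phi> (tree_oracle (restricted_tree m n R)) (tree_oracle T)"
    and rest: "wwkl_tree q T \<and> (\<forall>f. is_path T f \<longrightarrow> (\<exists>f'. is_path (restricted_tree m n R) f'
      \<and> computes \<Psi> (join (tree_oracle (restricted_tree m n R)) (path_oracle f)) (path_oracle f')))"
    using red unfolding tree_reduction_def by blast
  have "agrees_below K (tree_oracle (restricted_tree m n R)) (tree_oracle UNIV)"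
    using agrees_below_mono[OF restricted_tree_oracle] unfolding m_def by simp
  then have "\<forall>\<sigma>. length \<sigma> = L \<longrightarrow> (\<sigma> \<in> T \<longleftrightarrow> \<sigma> \<in> T0)" using K[OF _ \<Phi>_S] by blast
  moreover have "L \<le> m" "n \<le> m" unfolding m_def by simp_all
  ultimately show ?thesis using rest by blast
qed

text \<open>Let T0 = Phi(full tree) with a deciding level L.  Choose R of density
  at least p among the length-n strings such that the level-L nodes of T0 with forced bits in R
  form a set Bd of measure below q.  The restricted instance S agrees with the full tree on the
  finite part of the oracle Phi uses for level L, so Phi(S) coincides with T0 on level L.  Being
  a q-tree, Phi(S) has a path through a level-L node outside Bd; the solution of S that Psi
  computes from it starts with bits outside R, which no path through S does.\<close>
lemma no_tree_reduction:
  fixes p q :: rat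
  assumes "0 < p" and "p < q" and "q < 1"
  shows "\<not> tree_reduction p q \<Phi> \<Psi>"
proof
  assume red: "tree_reduction p q \<Phi> \<Psi>"
  let ?full = "tree_oracle (UNIV :: bool list set)"
  obtain n where gap: "1 < (q - p) * 2 ^ n" using exists_gap_exponent assms by blast
  obtain T0 L where \<Phi>_full: "computes \<Phi> ?full (tree_oracle T0)"
    and dec: "\<And>\<sigma>. \<sigma> \<in> T0 \<Longrightarrow> length \<sigma> = L \<Longrightarrow> decides \<Psi> ?full n \<sigma>"
    using deciding_level_of_full_image[OF red] assms by fastforce
  define Lev where "Lev = {\<sigma> \<in> T0. length \<sigma> = L}"
  define Bd where "Bd R = {\<sigma> \<in> Lev. forced_bits \<Psi> ?full n \<sigma> \<in> R}" for R
  obtain R where R: "R \<subseteq> {\<tau>. length \<tau> = n}" "p * 2 ^ n \<le> of_nat (card R)"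
    and small: "of_nat (card (Bd R)) < q * 2 ^ L"
    using low_density_preimage[OF \<open>0 < p\<close> _ gap, of Lev L "forced_bits \<Psi> ?full n"] assms
    unfolding Lev_def Bd_def forced_bits_def by auto
  obtain m T where "L \<le> m" and "n \<le> m" and T: "wwkl_tree q T"
    and same_level: "\<And>\<sigma>. length \<sigma> = L \<Longrightarrow> \<sigma> \<in> T \<longleftrightarrow> \<sigma> \<in> T0"
    and \<Psi>_S: "\<And>f. is_path T f \<Longrightarrow> \<exists>f'. is_path (restricted_tree m n R) f'
      \<and> computes \<Psi> (join (tree_oracle (restricted_tree m n R)) (path_oracle f)) (path_oracle f')"
    using restricted_image_level[OF red \<Phi>_full, where L = L and n = n and R = R] R assms by auto
  have "\<forall>\<sigma>\<in>Bd R. length \<sigma> = L" unfolding Bd_def Lev_def by simp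
  then obtain f where f: "is_path T f" and avoid: "map f [0..<L] \<notin> Bd R"
    using wwkl_path_avoiding[OF T _ small] by blast
  let ?\<sigma> = "map f [0..<L]"
  have "?\<sigma> \<in> T" using f unfolding is_path_def by blast
  then have "?\<sigma> \<in> Lev" using same_level unfolding Lev_def by simp
  then have not_R: "forced_bits \<Psi> ?full n ?\<sigma> \<notin> R" using avoid unfolding Bd_def by simp
  have "decides \<Psi> ?full n ?\<sigma>" using dec \<open>?\<sigma> \<in> Lev\<close> unfolding Lev_def by simp
  moreover have "agrees_below (length ?\<sigma>) (tree_oracle (restricted_tree m n R)) ?full"
    using agrees_below_mono[OF restricted_tree_oracle] \<open>L \<le> m\<close> by simp
  moreover obtain f' where "is_path (restricted_tree m n R) f'"
    and "computes \<Psi> (join (tree_oracle (restricted_tree m n R)) (path_oracle f)) (path_oracle f')"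
    using \<Psi>_S[OF f] by blast
  ultimately have "forced_bits \<Psi> ?full n ?\<sigma> \<in> R"
    using \<open>n \<le> m\<close> by (intro restricted_solution_bits) auto
  then show False using not_R by simp
qed

theorem proposition4p6:
  fixes p q :: rat
  assumes "0 < p" and "p < q" and "q < 1"
  shows "\<not> weihrauch_le (qWWKL p) (qWWKL q)"
  using tree_reduction_of_weihrauch_le no_tree_reduction[OF assms] by blast

end
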